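(* Let $\alpha\in[0,1)$ and let $G=(V,E)$ be a countable graph whose degrees are uniformly bounded by $\Delta$. Then there exists a non-vanishing equilibrium $\mu$ on $G$ with $\mu(e)\ge 2/\Delta^{1/(1-\alpha)}$ for all $e\in E$.
   Context: Edges are two-element subsets of $V$; $E_v=\{e\in E:v\in e\}$. A vector $\mu\in[0,\infty)^E$ is an equilibrium on $G$ if $\mu(e)=\sum_{v\in e}\mu(e)^\alpha/\sum_{e'\in E_v}\mu(e')^\alpha$ for every $e\in E$ with $\mu(e)>0$; it is non-vanishing if $\mu(e)>0$ for all $e\in E$. *)

theory Defs
  imports "HOL-Analysis.Analysis"
begin

definition is_graph :: "'a set \<Rightarrow> 'a set set \<Rightarrow> bool" where
  "is_graph V E \<longleftrightarrow> (\<forall>e\<in>E. e \<subseteq> V \<and> card e = 2)"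

definition inc_edges :: "'a set set \<Rightarrow> 'a \<Rightarrow> 'a set set" where
  "inc_edges E v = {e \<in> E. v \<in> e}"

definition degree_bounded :: "'a set \<Rightarrow> 'a set set \<Rightarrow> nat \<Rightarrow> bool" where
  "degree_bounded V E \<Delta> \<longleftrightarrow>
     (\<forall>v\<in>V. finite (inc_edges E v) \<and> card (inc_edges E v) \<le> \<Delta>)"

definition equilibrium :: "real \<Rightarrow> 'a set set \<Rightarrow> ('a set \<Rightarrow> real) \<Rightarrow> bool" where
  "equilibrium \<alpha> E \<mu> \<longleftrightarrow>
     (\<forall>e\<in>E. \<mu> e \<ge> 0) \<and>
     (\<forall>e\<in>E. \<mu> e > 0 \<longrightarrow>
        \<mu> e = (\<Sum>v\<in>e. \<mu> e powr \<alpha> / (\<Sum>e'\<in>inc_edges E v. \<mu> e' powr \<alpha>)))"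

definition non_vanishing :: "'a set set \<Rightarrow> ('a set \<Rightarrow> real) \<Rightarrow> bool" where
  "non_vanishing E \<mu> \<longleftrightarrow> (\<forall>e\<in>E. \<mu> e > 0)"

end

(*
  For alpha > 0 the equilibria are the critical points of the potential
    Phi(mu) = sum_v ln (sum_{e at v} mu(e)^alpha) - alpha * sum_e mu(e),
  whose partial derivative in mu(e) is alpha (F(mu)(e) - mu(e)) / mu(e), F being the right-hand
  side of the equilibrium equation. On a finite graph, maximise Phi over the box [m, 2]^E with
  m = 2 / Delta^(1/(1-alpha)): F never exceeds 2, and F(mu)(e) >= m whenever mu(e) = m, so the
  maximiser is a fixed point of F even on the faces of the box. For an infinite graph of bounded
  degree, the equation of an edge only involves the edges at its two endpoints, so compactness of
  the box (Tychonoff) assembles the finite solutions. For alpha = 0 the equilibrium is explicit: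
  mu(e) = sum_{v in e} 1 / deg v.
*)

theory Submission
  imports Defs
begin

definition vertex_load :: "real \<Rightarrow> 'a set set \<Rightarrow> ('a set \<Rightarrow> real) \<Rightarrow> 'a \<Rightarrow> real" where
  "vertex_load \<alpha> E \<mu> v = (\<Sum>e\<in>inc_edges E v. \<mu> e powr \<alpha>)"

definition equilibrium_map :: "real \<Rightarrow> 'a set set \<Rightarrow> ('a set \<Rightarrow> real) \<Rightarrow> 'a set \<Rightarrow> real" where
  "equilibrium_map \<alpha> E \<mu> e = (\<Sum>v\<in>e. \<mu> e powr \<alpha> / vertex_load \<alpha> E \<mu> v)"

definition equilibrium_potential :: "real \<Rightarrow> 'a set set \<Rightarrow> ('a set \<Rightarrow> real) \<Rightarrow> real" where
  "equilibrium_potential \<alpha> E \<mu> = (\<Sum>v\<in>\<Union>E. ln (vertex_load \<alpha> E \<mu> v)) - \<alpha> * (\<Sum>e\<in>E. \<mu> e)"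

text \<open>Weights of non-edges are boxed too: they never enter the equations, and the full product
  of intervals is compact.\<close>
definition weight_box :: "real \<Rightarrow> ('i \<Rightarrow> real) set" where
  "weight_box m = {\<mu>. \<forall>i. \<mu> i \<in> {m..2}}"

definition weight_floor :: "real \<Rightarrow> nat \<Rightarrow> real" where
  "weight_floor \<alpha> \<Delta> = 2 / real \<Delta> powr (1 / (1 - \<alpha>))"

lemma compact_box:
  fixes K :: "'i \<Rightarrow> 'b::topological_space set"
  assumes "\<And>i. compact (K i)"
  shows "compact {f. \<forall>i. f i \<in> K i}"
proof -
  have "{f. \<forall>i. f i \<in> K i} = PiE UNIV K"
    by (auto simp: PiE_def extensional_def Pi_def)
  moreover have "compactin (product_topology (\<lambda>i. euclidean) UNIV) (PiE UNIV K)"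
    using assms by (simp add: compactin_PiE)
  ultimately show ?thesis
    by (simp add: euclidean_product_topology)
qed

lemma compact_weight_box: "compact (weight_box m)"
  unfolding weight_box_def by (rule compact_box) simp

lemma closed_weight_box: "closed (weight_box m :: ('i \<Rightarrow> real) set)"
proof -
  have box: "weight_box m = (\<Inter>i. (\<lambda>\<mu>::'i \<Rightarrow> real. \<mu> i) -` {m..2})"
    by (auto simp: weight_box_def)
  have "closed ((\<lambda>\<mu>::'i \<Rightarrow> real. \<mu> i) -` {m..2})" for i
    by (intro closed_vimage closed_atLeastAtMost continuous_on_product_coordinates)
  then show ?thesis
    unfolding box by blast
qed

lemma weight_box_upd:
  "\<mu> \<in> weight_box m \<Longrightarrow> s \<in> {m..2} \<Longrightarrow> \<mu>(i := s) \<in> weight_box m"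
  by (simp add: weight_box_def)

lemma weight_box_pos: "0 < m \<Longrightarrow> \<forall>\<mu>\<in>weight_box m. \<forall>i. 0 < \<mu> i"
  by (auto simp: weight_box_def intro: less_le_trans)

lemma weight_floor_pos: "1 \<le> \<Delta> \<Longrightarrow> 0 < weight_floor \<alpha> \<Delta>"
  by (simp add: weight_floor_def)

lemma weight_floor_le_two:
  assumes "\<alpha> < 1" "1 \<le> \<Delta>"
  shows "weight_floor \<alpha> \<Delta> \<le> 2"
proof -
  have "1 \<le> real \<Delta> powr (1 / (1 - \<alpha>))"
    using assms by (intro ge_one_powr_ge_zero) auto
  then show ?thesis
    by (simp add: weight_floor_def divide_le_eq)
qed

text \<open>When all weights are at most 2, \<open>2 t\<^sup>\<alpha> / (\<Delta> 2\<^sup>\<alpha>)\<close> bounds the equilibrium map from below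
  at an edge of weight \<open>t\<close>; the floor is the fixed point of this bound.\<close>
lemma weight_floor_fixed_point:
  assumes "\<alpha> < 1" "1 \<le> \<Delta>"
  defines "m \<equiv> weight_floor \<alpha> \<Delta>"
  shows "2 * m powr \<alpha> / (real \<Delta> * 2 powr \<alpha>) = m"
proof -
  have m_pos: "0 < m"
    using assms by (simp add: m_def weight_floor_pos)
  have "m powr (1 - \<alpha>) = 2 powr (1 - \<alpha>) / (real \<Delta> powr (1 / (1 - \<alpha>))) powr (1 - \<alpha>)"
    by (simp add: m_def weight_floor_def powr_divide)
  also have "\<dots> = 2 powr (1 - \<alpha>) / real \<Delta>"
    using assms by (simp add: powr_powr)
  finally have "real \<Delta> * m powr (1 - \<alpha>) = 2 powr (1 - \<alpha>)"
    using assms(2) by simp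
  then have "m * (real \<Delta> * 2 powr \<alpha>) = m powr \<alpha> * (2 powr (1 - \<alpha>) * 2 powr \<alpha>)"
    using m_pos by (simp add: powr_diff field_simps)
  also have "\<dots> = 2 * m powr \<alpha>"
    by (simp flip: powr_add)
  finally show ?thesis
    using assms(2) by (simp add: field_simps)
qed

lemma inc_edges_iff [simp]: "e \<in> inc_edges E v \<longleftrightarrow> e \<in> E \<and> v \<in> e"
  by (simp add: inc_edges_def)

lemma card_inc_edges_pos:
  "e \<in> E \<Longrightarrow> v \<in> e \<Longrightarrow> finite (inc_edges E v) \<Longrightarrow> 0 < card (inc_edges E v)"
  by (metis card_gt_0_iff empty_iff inc_edges_iff)

lemma one_le_degree_bound:
  assumes "E \<noteq> {}" "\<forall>e\<in>E. card e = 2"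
    and "\<forall>v. finite (inc_edges E v) \<and> card (inc_edges E v) \<le> \<Delta>"
  shows "1 \<le> \<Delta>"
proof -
  obtain e v where "e \<in> E" "v \<in> e"
    using assms(1,2) by (metis all_not_in_conv card.empty zero_neq_numeral)
  then have "0 < card (inc_edges E v)"
    using assms(3) by (intro card_inc_edges_pos) auto
  then show ?thesis
    using assms(3)[rule_format, of v] by linarith
qed

lemma degree_bounded_everywhere:
  assumes "is_graph V E" "degree_bounded V E \<Delta>"
  shows "finite (inc_edges E v) \<and> card (inc_edges E v) \<le> \<Delta>"
proof (cases "v \<in> V")
  case True
  then show ?thesis
    using assms(2) by (simp add: degree_bounded_def)
next
  case False
  then have "inc_edges E v = {}"
    using assms(1) unfolding is_graph_def inc_edges_def by blast
  then show ?thesis by simp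
qed

lemma equilibrium_if_positive_fixed_point:
  assumes "\<forall>e\<in>E. 0 < \<mu> e \<and> \<mu> e = equilibrium_map \<alpha> E \<mu> e"
  shows "equilibrium \<alpha> E \<mu> \<and> non_vanishing E \<mu>"
  using assms unfolding equilibrium_def non_vanishing_def equilibrium_map_def vertex_load_def
  by (blast intro: less_imp_le)

lemma powr_le_vertex_load:
  assumes "finite (inc_edges E v)" "e \<in> E" "v \<in> e"
  shows "\<mu> e powr \<alpha> \<le> vertex_load \<alpha> E \<mu> v"
  unfolding vertex_load_def using assms by (intro member_le_sum) auto

lemma vertex_load_pos:
  assumes "finite (inc_edges E v)" "e \<in> E" "v \<in> e" "\<mu> e \<noteq> 0"
  shows "0 < vertex_load \<alpha> E \<mu> v"
  using powr_le_vertex_load[OF assms(1-3)] assms(4) by (smt (verit) powr_gt_zero)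

lemma vertex_load_le:
  assumes "\<forall>e\<in>E. 0 \<le> \<mu> e \<and> \<mu> e \<le> b" "0 \<le> \<alpha>" "card (inc_edges E v) \<le> \<Delta>"
  shows "vertex_load \<alpha> E \<mu> v \<le> real \<Delta> * b powr \<alpha>"
proof -
  have "vertex_load \<alpha> E \<mu> v \<le> (\<Sum>e\<in>inc_edges E v. b powr \<alpha>)"
    unfolding vertex_load_def using assms(1,2) by (intro sum_mono powr_mono2) auto
  also have "\<dots> \<le> real \<Delta> * b powr \<alpha>"
    using assms(3) by (simp add: mult_right_mono)
  finally show ?thesis .
qed

lemma equilibrium_map_le_two:
  assumes "card e = 2" "e \<in> E" "\<forall>v\<in>e. finite (inc_edges E v)" "\<mu> e \<noteq> 0"
  shows "equilibrium_map \<alpha> E \<mu> e \<le> 2"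
proof -
  have "equilibrium_map \<alpha> E \<mu> e \<le> (\<Sum>v\<in>e. 1)"
    unfolding equilibrium_map_def
  proof (rule sum_mono)
    fix v assume "v \<in> e"
    then show "\<mu> e powr \<alpha> / vertex_load \<alpha> E \<mu> v \<le> 1"
      using assms powr_le_vertex_load[of E v e \<mu> \<alpha>] vertex_load_pos[of E v e \<mu> \<alpha>]
      by (simp add: divide_le_eq_1)
  qed
  then show ?thesis
    using assms(1) by simp
qed

lemma equilibrium_map_ge:
  assumes "card e = 2" "e \<in> E" "\<forall>v\<in>e. finite (inc_edges E v) \<and> card (inc_edges E v) \<le> \<Delta>"
    and "\<forall>e\<in>E. 0 < \<mu> e \<and> \<mu> e \<le> b" "0 \<le> \<alpha>"
  shows "2 * \<mu> e powr \<alpha> / (real \<Delta> * b powr \<alpha>) \<le> equilibrium_map \<alpha> E \<mu> e"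
proof -
  have "(\<Sum>v\<in>e. \<mu> e powr \<alpha> / (real \<Delta> * b powr \<alpha>)) \<le> equilibrium_map \<alpha> E \<mu> e"
    unfolding equilibrium_map_def
  proof (rule sum_mono)
    fix v assume "v \<in> e"
    then show "\<mu> e powr \<alpha> / (real \<Delta> * b powr \<alpha>) \<le> \<mu> e powr \<alpha> / vertex_load \<alpha> E \<mu> v"
      using assms vertex_load_pos[of E v e \<mu> \<alpha>] vertex_load_le[of E \<mu> b \<alpha> v \<Delta>]
      by (intro divide_left_mono) (auto simp: less_imp_le)
  qed
  then show ?thesis
    using assms(1) by simp
qed

lemma exponent_zero_fixed_point:
  assumes "\<forall>e\<in>E. card e = 2" "\<forall>v. finite (inc_edges E v) \<and> card (inc_edges E v) \<le> \<Delta>"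
    and "\<forall>e\<in>E. \<mu> e = (\<Sum>v\<in>e. 1 / real (card (inc_edges E v)))" "e \<in> E"
  shows "weight_floor 0 \<Delta> \<le> \<mu> e \<and> \<mu> e = equilibrium_map 0 E \<mu> e"
proof -
  have card_inc: "0 < card (inc_edges E v)" "card (inc_edges E v) \<le> \<Delta>" if "e' \<in> E" "v \<in> e'" for e' v
    using assms(2) that card_inc_edges_pos[of e' E v] by auto
  have "(\<Sum>v\<in>e. 1 / real \<Delta>) \<le> \<mu> e"
    unfolding assms(3)[rule_format, OF assms(4)]
  proof (intro sum_mono divide_left_mono)
    fix v assume "v \<in> e"
    with card_inc[OF assms(4) this] show "real (card (inc_edges E v)) \<le> real \<Delta>"
      and "0 < real \<Delta> * real (card (inc_edges E v))"
      by auto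
  qed simp
  then have low: "weight_floor 0 \<Delta> \<le> \<mu> e"
    using assms(1,4) by (simp add: weight_floor_def)
  have pos: "0 < \<mu> e'" if "e' \<in> E" for e'
  proof -
    have "finite e'" "e' \<noteq> {}"
      using assms(1) that card_gt_0_iff[of e'] by auto
    then show ?thesis
      using assms(3) that card_inc[OF that] by (auto intro!: sum_pos)
  qed
  have "vertex_load 0 E \<mu> v = real (card (inc_edges E v))" for v
    unfolding vertex_load_def using pos by (simp add: less_imp_neq[symmetric])
  then have "equilibrium_map 0 E \<mu> e = \<mu> e"
    using assms(3,4) pos[OF assms(4)] by (simp add: equilibrium_map_def)
  with low show ?thesis by simp
qed

lemma continuous_on_coordinate [continuous_intros]: "continuous_on S (\<lambda>x. x i)"
  by (rule continuous_on_product_then_coordinatewise[OF continuous_on_id])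

lemma continuous_on_vertex_load:
  assumes "finite (inc_edges E v)" "\<forall>\<mu>\<in>S. \<forall>e. 0 < \<mu> e"
  shows "continuous_on S (\<lambda>\<mu>. vertex_load \<alpha> E \<mu> v)"
  unfolding vertex_load_def using assms(2)
  by (intro continuous_intros) (metis less_irrefl)

lemma continuous_on_equilibrium_map:
  assumes "e \<in> E" "\<forall>v\<in>e. finite (inc_edges E v)" "\<forall>\<mu>\<in>S. \<forall>e. 0 < \<mu> e"
  shows "continuous_on S (\<lambda>\<mu>. equilibrium_map \<alpha> E \<mu> e)"
  unfolding equilibrium_map_def using assms vertex_load_pos[of E _ e]
  by (intro continuous_intros continuous_on_vertex_load) (metis less_irrefl)+

lemma continuous_on_equilibrium_potential:
  assumes "finite E" "\<forall>\<mu>\<in>S. \<forall>e. 0 < \<mu> e"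
  shows "continuous_on S (equilibrium_potential \<alpha> E)"
proof -
  have fin_inc: "finite (inc_edges E v)" for v
    using assms(1) by (simp add: inc_edges_def)
  have "0 < vertex_load \<alpha> E \<mu> v" if "\<mu> \<in> S" "v \<in> \<Union>E" for \<mu> v
    using that assms(2) vertex_load_pos[OF fin_inc] by (metis UnionE less_irrefl)
  then show ?thesis
    unfolding equilibrium_potential_def using assms(2) fin_inc
    by (intro continuous_intros continuous_on_vertex_load) force+
qed

lemma has_real_derivative_vertex_load:
  assumes "finite (inc_edges E v)" "0 < \<mu> e"
  shows "((\<lambda>s. vertex_load \<alpha> E (\<mu>(e := s)) v) has_real_derivative
           (if e \<in> inc_edges E v then \<alpha> * \<mu> e powr (\<alpha> - 1) else 0)) (at (\<mu> e))"
proof -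
  have "((\<lambda>s. (\<mu>(e := s)) e' powr \<alpha>) has_real_derivative
          (if e' = e then \<alpha> * \<mu> e powr (\<alpha> - 1) else 0)) (at (\<mu> e))" for e'
    using has_real_derivative_powr[OF assms(2), of \<alpha>] by (cases "e' = e") auto
  then have "((\<lambda>s. vertex_load \<alpha> E (\<mu>(e := s)) v) has_real_derivative
          (\<Sum>e'\<in>inc_edges E v. if e' = e then \<alpha> * \<mu> e powr (\<alpha> - 1) else 0)) (at (\<mu> e))"
    unfolding vertex_load_def by (rule DERIV_sum)
  then show ?thesis
    using assms(1) by simp
qed

lemma has_real_derivative_ln_vertex_load:
  assumes "finite (inc_edges E v)" "0 < \<mu> e" "0 < vertex_load \<alpha> E \<mu> v"
  shows "((\<lambda>s. ln (vertex_load \<alpha> E (\<mu>(e := s)) v)) has_real_derivative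
           (if e \<in> inc_edges E v then \<alpha> * \<mu> e powr (\<alpha> - 1) else 0) / vertex_load \<alpha> E \<mu> v)
           (at (\<mu> e))"
proof -
  have "(ln has_real_derivative 1 / vertex_load \<alpha> E \<mu> v) (at (vertex_load \<alpha> E (\<mu>(e := \<mu> e)) v))"
    using DERIV_ln_divide[OF assms(3)] by simp
  from DERIV_chain2[OF this has_real_derivative_vertex_load[where \<mu>=\<mu> and e=e, OF assms(1,2)]]
  show ?thesis
    by simp
qed

lemma has_real_derivative_equilibrium_potential:
  assumes "finite E" "\<forall>e\<in>E. finite e" "\<forall>e\<in>E. 0 < \<mu> e" "e \<in> E"
  shows "((\<lambda>s. equilibrium_potential \<alpha> E (\<mu>(e := s))) has_real_derivative
           \<alpha> * (equilibrium_map \<alpha> E \<mu> e / \<mu> e - 1)) (at (\<mu> e))"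
proof -
  define t where "t = \<mu> e"
  define L where "L v = vertex_load \<alpha> E \<mu> v" for v
  have t_pos: "0 < t"
    using assms(3,4) by (simp add: t_def)
  have fin_inc: "finite (inc_edges E v)" for v
    using assms(1) by (simp add: inc_edges_def)
  have L_pos: "0 < L v" if "v \<in> \<Union>E" for v
    using that assms(3) vertex_load_pos[OF fin_inc] by (force simp: L_def)
  have "((\<lambda>s. ln (vertex_load \<alpha> E (\<mu>(e := s)) v)) has_real_derivative
          (if e \<in> inc_edges E v then \<alpha> * t powr (\<alpha> - 1) else 0) / L v) (at t)"
    if "v \<in> \<Union>E" for v
    unfolding t_def L_def
    by (rule has_real_derivative_ln_vertex_load[where \<mu>=\<mu> and e=e])
      (use fin_inc t_pos L_pos[OF that] in \<open>auto simp: t_def L_def\<close>)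
  moreover have "((\<lambda>s. \<Sum>e'\<in>E. (\<mu>(e := s)) e') has_real_derivative
          (\<Sum>e'\<in>E. if e' = e then 1 else 0)) (at t)"
    by (intro DERIV_sum) (auto intro: derivative_eq_intros)
  ultimately have "((\<lambda>s. equilibrium_potential \<alpha> E (\<mu>(e := s))) has_real_derivative
          (\<Sum>v\<in>\<Union>E. (if e \<in> inc_edges E v then \<alpha> * t powr (\<alpha> - 1) else 0) / L v)
          - \<alpha> * (\<Sum>e'\<in>E. if e' = e then 1 else 0)) (at t)"
    unfolding equilibrium_potential_def by (intro DERIV_diff DERIV_sum DERIV_cmult) auto
  moreover have "(\<Sum>v\<in>\<Union>E. (if e \<in> inc_edges E v then \<alpha> * t powr (\<alpha> - 1) else 0) / L v)
      = \<alpha> * t powr (\<alpha> - 1) * (\<Sum>v\<in>e. 1 / L v)"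
  proof -
    have "(\<Sum>v\<in>\<Union>E. (if e \<in> inc_edges E v then \<alpha> * t powr (\<alpha> - 1) else 0) / L v)
        = (\<Sum>v\<in>\<Union>E. if v \<in> e then \<alpha> * t powr (\<alpha> - 1) / L v else 0)"
      using assms(4) by (intro sum.cong) auto
    also have "\<dots> = (\<Sum>v\<in>{v \<in> \<Union>E. v \<in> e}. \<alpha> * t powr (\<alpha> - 1) / L v)"
      using assms(1,2) by (intro sum.inter_filter[symmetric]) auto
    also have "{v \<in> \<Union>E. v \<in> e} = e"
      using assms(4) by blast
    finally show ?thesis
      by (simp add: sum_distrib_left)
  qed
  moreover have "equilibrium_map \<alpha> E \<mu> e / t = t powr (\<alpha> - 1) * (\<Sum>v\<in>e. 1 / L v)"
    using t_pos by (simp add: equilibrium_map_def L_def t_def sum_distrib_left powr_diff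
        sum_divide_distrib mult.commute)
  ultimately show ?thesis
    using assms(1,4) by (simp add: t_def algebra_simps)
qed

lemma has_real_derivative_interval_max:
  fixes g :: "real \<Rightarrow> real"
  assumes "(g has_real_derivative D) (at t)" "\<forall>s\<in>{a..b}. g s \<le> g t"
  shows "t \<in> {a..<b} \<Longrightarrow> D \<le> 0" and "t \<in> {a<..b} \<Longrightarrow> 0 \<le> D"
proof -
  show "D \<le> 0" if "t \<in> {a..<b}"
  proof (rule ccontr)
    assume "\<not> D \<le> 0"
    then obtain d where "0 < d" and inc: "\<And>h. 0 < h \<Longrightarrow> h < d \<Longrightarrow> g t < g (t + h)"
      using DERIV_pos_inc_right[OF assms(1)] by force
    define h where "h = min (d / 2) (b - t)"
    have "0 < h" "h < d" "t + h \<in> {a..b}"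
      using that \<open>0 < d\<close> by (auto simp: h_def)
    then have "g t < g (t + h)"
      using inc by blast
    moreover have "g (t + h) \<le> g t"
      using assms(2) \<open>t + h \<in> {a..b}\<close> by blast
    ultimately show False
      by simp
  qed
  show "0 \<le> D" if "t \<in> {a<..b}"
  proof (rule ccontr)
    assume "\<not> 0 \<le> D"
    then obtain d where "0 < d" and dec: "\<And>h. 0 < h \<Longrightarrow> h < d \<Longrightarrow> g t < g (t - h)"
      using DERIV_neg_dec_left[OF assms(1)] by force
    define h where "h = min (d / 2) (t - a)"
    have "0 < h" "h < d" "t - h \<in> {a..b}"
      using that \<open>0 < d\<close> by (auto simp: h_def)
    then have "g t < g (t - h)"
      using dec by blast
    moreover have "g (t - h) \<le> g t"
      using assms(2) \<open>t - h \<in> {a..b}\<close> by blast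
    ultimately show False
      by simp
  qed
qed

lemma fixed_point_at_interval_max:
  fixes g :: "real \<Rightarrow> real"
  assumes "(g has_real_derivative c * (y / t - 1)) (at t)" "0 < c" "0 < t" "t \<in> {a..b}"
    and "\<forall>s\<in>{a..b}. g s \<le> g t" "t = b \<Longrightarrow> y \<le> b" "t = a \<Longrightarrow> a \<le> y"
  shows "y = t"
proof -
  have "y \<le> t"
  proof (cases "t < b")
    case True
    then have "c * (y / t - 1) \<le> 0"
      using has_real_derivative_interval_max(1)[OF assms(1,5)] assms(4) by simp
    then show ?thesis
      using assms(2,3) by (simp add: mult_le_0_iff divide_le_eq)
  next
    case False
    then show ?thesis
      using assms(4,6) by simp
  qed
  moreover have "t \<le> y"
  proof (cases "a < t")
    case True
    then have "0 \<le> c * (y / t - 1)"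
      using has_real_derivative_interval_max(2)[OF assms(1,5)] assms(4) by simp
    then show ?thesis
      using assms(2,3) by (simp add: zero_le_mult_iff le_divide_eq)
  next
    case False
    then show ?thesis
      using assms(4,7) by simp
  qed
  ultimately show ?thesis
    by simp
qed

text \<open>At a maximiser of the potential over the box, a coordinate strictly inside \<open>[m, 2]\<close> is
  critical, while on the faces the equilibrium map points back into the box.\<close>
lemma potential_maximiser_is_fixed_point:
  assumes "0 < \<alpha>" "\<alpha> < 1" "1 \<le> \<Delta>" "finite E" "\<forall>e\<in>E. card e = 2"
    and "\<forall>v. card (inc_edges E v) \<le> \<Delta>"
    and "\<mu> \<in> weight_box (weight_floor \<alpha> \<Delta>)"
    and "\<forall>\<nu>\<in>weight_box (weight_floor \<alpha> \<Delta>). equilibrium_potential \<alpha> E \<nu> \<le> equilibrium_potential \<alpha> E \<mu>"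
    and "e \<in> E"
  shows "\<mu> e = equilibrium_map \<alpha> E \<mu> e"
proof -
  define m where "m = weight_floor \<alpha> \<Delta>"
  define F where "F = equilibrium_map \<alpha> E \<mu> e"
  have m_pos: "0 < m"
    using assms(3) by (simp add: m_def weight_floor_pos)
  have range: "\<mu> e' \<in> {m..2}" for e'
    using assms(7) by (simp add: m_def weight_box_def)
  then have pos: "0 < \<mu> e'" for e'
    using m_pos by (auto intro: less_le_trans)
  have fin_inc: "finite (inc_edges E v)" for v
    using assms(4) by (simp add: inc_edges_def)
  have fin_edges: "\<forall>e\<in>E. finite e"
    using assms(5) card.infinite by force
  have deriv: "((\<lambda>s. equilibrium_potential \<alpha> E (\<mu>(e := s))) has_real_derivative
      \<alpha> * (F / \<mu> e - 1)) (at (\<mu> e))"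
    unfolding F_def using assms(4,9) fin_edges pos
    by (intro has_real_derivative_equilibrium_potential) auto
  have max: "\<forall>s\<in>{m..2}. equilibrium_potential \<alpha> E (\<mu>(e := s))
      \<le> equilibrium_potential \<alpha> E (\<mu>(e := \<mu> e))"
    using assms(8) weight_box_upd[OF assms(7)] by (simp add: m_def)
  have "F \<le> 2"
    unfolding F_def using assms(5,9) fin_inc pos[of e] by (intro equilibrium_map_le_two) auto
  moreover have "m \<le> F" if "\<mu> e = m"
  proof -
    have "2 * \<mu> e powr \<alpha> / (real \<Delta> * 2 powr \<alpha>) \<le> F"
      unfolding F_def using assms(1,5,6,9) fin_inc pos range
      by (intro equilibrium_map_ge) auto
    then show ?thesis
      using that weight_floor_fixed_point[OF assms(2,3)] by (simp add: m_def)
  qed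
  ultimately have "F = \<mu> e"
    using fixed_point_at_interval_max[OF deriv assms(1) pos range max] by blast
  then show ?thesis
    by (simp add: F_def)
qed

lemma finite_graph_fixed_point:
  assumes "0 < \<alpha>" "\<alpha> < 1" "1 \<le> \<Delta>" "finite E" "\<forall>e\<in>E. card e = 2"
    and "\<forall>v. card (inc_edges E v) \<le> \<Delta>"
  shows "\<exists>\<mu>\<in>weight_box (weight_floor \<alpha> \<Delta>). \<forall>e\<in>E. \<mu> e = equilibrium_map \<alpha> E \<mu> e"
proof -
  let ?B = "weight_box (weight_floor \<alpha> \<Delta>)"
  have "(\<lambda>_. weight_floor \<alpha> \<Delta>) \<in> ?B"
    using weight_floor_le_two[OF assms(2,3)] by (simp add: weight_box_def)
  moreover have "continuous_on ?B (equilibrium_potential \<alpha> E)"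
    by (intro continuous_on_equilibrium_potential assms(4) weight_box_pos weight_floor_pos assms(3))
  ultimately obtain \<mu> where "\<mu> \<in> ?B" "\<forall>\<nu>\<in>?B. equilibrium_potential \<alpha> E \<nu> \<le> equilibrium_potential \<alpha> E \<mu>"
    using continuous_attains_sup[OF compact_weight_box] by blast
  then show ?thesis
    using potential_maximiser_is_fixed_point[OF assms] by blast
qed

lemma finite_subgraph_with_same_incidences:
  assumes "finite F" "F \<subseteq> E" "\<forall>e\<in>F. finite e" "\<forall>v. finite (inc_edges E v)"
  obtains E' where "finite E'" "F \<subseteq> E'" "E' \<subseteq> E" "\<forall>e\<in>F. \<forall>v\<in>e. inc_edges E' v = inc_edges E v"
proof
  let ?E' = "F \<union> (\<Union>v\<in>\<Union>F. inc_edges E v)"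
  show "finite ?E'"
    using assms(1,3,4) by blast
  show "F \<subseteq> ?E'" "?E' \<subseteq> E"
    using assms(2) by auto
  show "\<forall>e\<in>F. \<forall>v\<in>e. inc_edges ?E' v = inc_edges E v"
    using assms(2) by auto
qed

text \<open>Any finitely many of the equations are solved by the fixed point of the finite subgraph
  spanned by the edges at their endpoints; Tychonoff does the rest.\<close>
lemma locally_finite_graph_fixed_point:
  assumes "0 < \<alpha>" "\<alpha> < 1" "1 \<le> \<Delta>" "\<forall>e\<in>E. card e = 2"
    and "\<forall>v. finite (inc_edges E v) \<and> card (inc_edges E v) \<le> \<Delta>"
  shows "\<exists>\<mu>\<in>weight_box (weight_floor \<alpha> \<Delta>). \<forall>e\<in>E. \<mu> e = equilibrium_map \<alpha> E \<mu> e"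
proof -
  define B :: "('a set \<Rightarrow> real) set" where "B = weight_box (weight_floor \<alpha> \<Delta>)"
  define T where "T e = {\<mu> \<in> B. \<mu> e = equilibrium_map \<alpha> E \<mu> e}" for e
  have pos: "\<forall>\<mu>\<in>B. \<forall>e. 0 < \<mu> e"
    unfolding B_def by (intro weight_box_pos weight_floor_pos assms(3))
  have fin_edges: "\<forall>e\<in>E. finite e"
    using assms(4) card.infinite by force
  have "closed (T e)" if "e \<in> E" for e
  proof -
    have "continuous_on B (\<lambda>\<mu>. equilibrium_map \<alpha> E \<mu> e)"
      using that assms(5) pos by (intro continuous_on_equilibrium_map) auto
    then have "continuous_on B (\<lambda>\<mu>. \<mu> e - equilibrium_map \<alpha> E \<mu> e)"
      by (intro continuous_on_diff continuous_on_coordinate)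
    then have "closed {\<mu> \<in> B. \<mu> e - equilibrium_map \<alpha> E \<mu> e = 0}"
      unfolding B_def by (rule continuous_closed_preimage_constant[OF _ closed_weight_box])
    then show ?thesis
      unfolding T_def by simp
  qed
  moreover have "B \<inter> (\<Inter>e\<in>F. T e) \<noteq> {}" if F: "finite F" "F \<subseteq> E" for F
  proof -
    have "\<forall>e\<in>F. finite e" "\<forall>v. finite (inc_edges E v)"
      using fin_edges F(2) assms(5) by auto
    then obtain E' where E': "finite E'" "F \<subseteq> E'" "E' \<subseteq> E"
      and same: "\<forall>e\<in>F. \<forall>v\<in>e. inc_edges E' v = inc_edges E v"
      by (rule finite_subgraph_with_same_incidences[OF F])
    have "card (inc_edges E' v) \<le> \<Delta>" for v
    proof -
      have "inc_edges E' v \<subseteq> inc_edges E v"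
        using E'(3) by auto
      then have "card (inc_edges E' v) \<le> card (inc_edges E v)"
        using assms(5) by (intro card_mono) auto
      then show ?thesis
        using assms(5) le_trans by blast
    qed
    moreover have "\<forall>e\<in>E'. card e = 2"
      using assms(4) E'(3) by blast
    ultimately obtain \<mu> where "\<mu> \<in> B" and fixed: "\<forall>e\<in>E'. \<mu> e = equilibrium_map \<alpha> E' \<mu> e"
      using finite_graph_fixed_point[OF assms(1-3) E'(1)] unfolding B_def by blast
    have "\<mu> \<in> T e" if "e \<in> F" for e
    proof -
      have "\<mu> e = equilibrium_map \<alpha> E' \<mu> e"
        using fixed E'(2) that by blast
      also have "\<dots> = equilibrium_map \<alpha> E \<mu> e"
        using same that by (simp add: equilibrium_map_def vertex_load_def)
      finally show ?thesis
        using \<open>\<mu> \<in> B\<close> unfolding T_def by blast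
    qed
    with \<open>\<mu> \<in> B\<close> show ?thesis by blast
  qed
  ultimately have "B \<inter> (\<Inter>e\<in>E. T e) \<noteq> {}"
    unfolding B_def by (rule compact_imp_fip_image[OF compact_weight_box])
  then show ?thesis
    unfolding B_def T_def by blast
qed

lemma exists_fixed_point_above_weight_floor:
  assumes "0 \<le> \<alpha>" "\<alpha> < 1" "1 \<le> \<Delta>" "\<forall>e\<in>E. card e = 2"
    and "\<forall>v. finite (inc_edges E v) \<and> card (inc_edges E v) \<le> \<Delta>"
  obtains \<mu> where "\<forall>e\<in>E. weight_floor \<alpha> \<Delta> \<le> \<mu> e \<and> \<mu> e = equilibrium_map \<alpha> E \<mu> e"
proof (cases "\<alpha> = 0")
  case True
  define \<mu> where "\<mu> e = (\<Sum>v\<in>e. 1 / real (card (inc_edges E v)))" for e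
  have "\<forall>e\<in>E. \<mu> e = (\<Sum>v\<in>e. 1 / real (card (inc_edges E v)))"
    by (simp add: \<mu>_def)
  then have "\<forall>e\<in>E. weight_floor 0 \<Delta> \<le> \<mu> e \<and> \<mu> e = equilibrium_map 0 E \<mu> e"
    using exponent_zero_fixed_point[OF assms(4,5)] by blast
  then show thesis
    using that[of \<mu>] unfolding True by blast
next
  case False
  with assms(1) have "0 < \<alpha>"
    by simp
  then obtain \<mu> where box: "\<mu> \<in> weight_box (weight_floor \<alpha> \<Delta>)"
    and fixed: "\<forall>e\<in>E. \<mu> e = equilibrium_map \<alpha> E \<mu> e"
    using locally_finite_graph_fixed_point[OF _ assms(2-5)] by blast
  from box have "weight_floor \<alpha> \<Delta> \<le> \<mu> e" for e
    by (simp add: weight_box_def)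
  then show thesis
    using that[of \<mu>] fixed by blast
qed

theorem mainTheorem2:
  fixes V :: "'a set" and E :: "'a set set" and \<alpha> :: real and \<Delta> :: nat
  assumes "0 \<le> \<alpha>" and "\<alpha> < 1"
    and "countable V"
    and "is_graph V E"
    and "degree_bounded V E \<Delta>"
  shows "\<exists>\<mu>. equilibrium \<alpha> E \<mu> \<and> non_vanishing E \<mu> \<and>
           (\<forall>e\<in>E. \<mu> e \<ge> 2 / (real \<Delta> powr (1 / (1 - \<alpha>))))"
proof (cases "E = {}")
  case True
  then show ?thesis
    by (simp add: equilibrium_def non_vanishing_def)
next
  case False
  have card2: "\<forall>e\<in>E. card e = 2"
    using assms(4) by (simp add: is_graph_def)
  have deg: "\<forall>v. finite (inc_edges E v) \<and> card (inc_edges E v) \<le> \<Delta>"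
    using degree_bounded_everywhere[OF assms(4,5)] by blast
  from False card2 deg have "1 \<le> \<Delta>"
    by (rule one_le_degree_bound)
  then obtain \<mu> where \<mu>: "\<forall>e\<in>E. weight_floor \<alpha> \<Delta> \<le> \<mu> e \<and> \<mu> e = equilibrium_map \<alpha> E \<mu> e"
    using exists_fixed_point_above_weight_floor[OF assms(1,2) _ card2 deg] by blast
  moreover have "0 < weight_floor \<alpha> \<Delta>"
    using \<open>1 \<le> \<Delta>\<close> by (rule weight_floor_pos)
  ultimately have "\<forall>e\<in>E. 0 < \<mu> e \<and> \<mu> e = equilibrium_map \<alpha> E \<mu> e"
    using less_le_trans by blast
  then have "equilibrium \<alpha> E \<mu> \<and> non_vanishing E \<mu>"
    by (rule equilibrium_if_positive_fixed_point)
  with \<mu> show ?thesis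
    unfolding weight_floor_def by blast
qed

end
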